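(* Let $M$ be a modular lattice of finite length and $n\ge 1$. The following are equivalent: (i) $M$ has breadth at most $n$; (ii) no complemented modular lattice of length $n+1$ (i.e. no subspace lattice of a possibly reducible projective geometry of dimension $n$) embeds into $M$ as a sublattice; (iii) for every $x\in S(M)$, the interval $[x,x^*]$ has length at most $n$ (i.e. is the subspace lattice of a possibly reducible projective geometry of dimension at most $n-1$).
   Context: $M$ has least element $0$ and greatest element $1$. For $a\in M$: $a^*$ is the join of all elements covering $a$ if $a<1$, and $1^*=1$. An interval $[a,b]$ is \emph{atomistic} if every element of it is a join of atoms of $[a,b]$. The \emph{skeleton} $S(M)$ is the set of least elements of the maximal (under inclusion) atomistic intervals of $M$. The \emph{breadth} of a lattice $K$ is the supremum of all $m$ for which there is a map $\varphi$ from the Boolean lattice $\mathbf{2}^m$ into $K$ with $\varphi(a)\le\varphi(b)\iff a\le b$. The length of a lattice is the supremum of $|C|-1$ over its chains $C$. *)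

theory Defs
  imports Main
begin

definition modular_lattice :: "'a::lattice itself \<Rightarrow> bool" where
  "modular_lattice _ \<longleftrightarrow> (\<forall>x y z::'a. x \<le> z \<longrightarrow> sup x (inf y z) = inf (sup x y) z)"

definition is_chain :: "'a::order set \<Rightarrow> bool" where
  "is_chain C \<longleftrightarrow> (\<forall>x\<in>C. \<forall>y\<in>C. x \<le> y \<or> y \<le> x)"

definition length_le :: "'a::order set \<Rightarrow> nat \<Rightarrow> bool" where
  "length_le S k \<longleftrightarrow> (\<forall>C\<subseteq>S. is_chain C \<longrightarrow> finite C \<and> card C \<le> k + 1)"

definition length_eq :: "'a::order set \<Rightarrow> nat \<Rightarrow> bool" where
  "length_eq S k \<longleftrightarrow> length_le S k \<and> (\<exists>C\<subseteq>S. is_chain C \<and> finite C \<and> card C = k + 1)"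

definition finite_length :: "'a::order itself \<Rightarrow> bool" where
  "finite_length _ \<longleftrightarrow> (\<exists>N. length_le (UNIV :: 'a set) N)"

definition breadth_le :: "'a::order itself \<Rightarrow> nat \<Rightarrow> bool" where
  "breadth_le _ n \<longleftrightarrow>
     (\<forall>m (\<phi>::nat set \<Rightarrow> 'a).
        (\<forall>A\<in>Pow {..<m}. \<forall>B\<in>Pow {..<m}. \<phi> A \<le> \<phi> B \<longleftrightarrow> A \<subseteq> B) \<longrightarrow> m \<le> n)"

definition is_lub_in :: "'a::order set \<Rightarrow> 'a set \<Rightarrow> 'a \<Rightarrow> bool" where
  "is_lub_in S A x \<longleftrightarrow> x \<in> S \<and> (\<forall>a\<in>A. a \<le> x) \<and> (\<forall>y\<in>S. (\<forall>a\<in>A. a \<le> y) \<longrightarrow> x \<le> y)"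

definition covers :: "'a::order \<Rightarrow> 'a \<Rightarrow> bool" where
  "covers a b \<longleftrightarrow> a < b \<and> \<not> (\<exists>c. a < c \<and> c < b)"

definition star :: "'a::bounded_lattice \<Rightarrow> 'a" where
  "star a = (if a = top then top else (THE s. is_lub_in UNIV {b. covers a b} s))"

definition interval_atoms :: "'a::order \<Rightarrow> 'a \<Rightarrow> 'a set" where
  "interval_atoms a b = {c. covers a c \<and> c \<le> b}"

definition atomistic :: "'a::order \<Rightarrow> 'a \<Rightarrow> bool" where
  "atomistic a b \<longleftrightarrow> a \<le> b \<and>
     (\<forall>x\<in>{a..b}. \<exists>A\<subseteq>interval_atoms a b. is_lub_in {a..b} A x)"

definition max_atomistic :: "'a::order \<Rightarrow> 'a \<Rightarrow> bool" where
  "max_atomistic a b \<longleftrightarrow> atomistic a b \<and>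
     \<not> (\<exists>c d. atomistic c d \<and> {a..b} \<subset> {c..d})"

definition skeleton :: "'a::order set" where
  "skeleton = {a. \<exists>b. max_atomistic a b}"

text \<open>A sublattice of M (nonempty, closed under meet and join) which, with the
  induced operations, is a complemented (modular) lattice of length k.
  Modularity is inherited from M automatically.\<close>
definition compl_mod_sublattice :: "'a::lattice set \<Rightarrow> nat \<Rightarrow> bool" where
  "compl_mod_sublattice S k \<longleftrightarrow>
     S \<noteq> {} \<and> (\<forall>x\<in>S. \<forall>y\<in>S. inf x y \<in> S \<and> sup x y \<in> S) \<and>
     (\<forall>x\<in>S. \<forall>y\<in>S. \<forall>z\<in>S. x \<le> z \<longrightarrow> sup x (inf y z) = inf (sup x y) z) \<and>
     (\<exists>z\<in>S. \<exists>u\<in>S. (\<forall>x\<in>S. z \<le> x \<and> x \<le> u) \<and>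
        (\<forall>x\<in>S. \<exists>y\<in>S. inf x y = z \<and> sup x y = u)) \<and>
     length_eq S k"

end

theory Submission
  imports Defs
begin

text \<open>
  Everything is reduced to irredundant families: elements \<open>c\<^sub>0, \<dots>, c\<^sub>n\<close> none of
  which lies below the join of the others (together with a base point \<open>z\<close>). The joins of
  subfamilies of such a family give an order embedding of \<open>2\<^sup>n\<^sup>+\<^sup>1\<close>, so breadth
  exceeds \<open>n\<close> exactly when such a family exists. In a modular lattice of finite length an
  irredundant family can be shrunk to one consisting of covers \<open>a\<^sub>i\<close> of a single element
  \<open>x\<close>; the joins of its subfamilies then form a Boolean sublattice of length \<open>n + 1\<close>
  whose top lies in an atomistic interval \<open>[x, x']\<close>, which extends to a maximal atomistic
  interval \<open>[s, b]\<close> with \<open>b \<le> s\<^sup>*\<close>. Conversely, a chain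
  \<open>v\<^sub>0 < \<dots> < v\<^sub>n\<^sub>+\<^sub>1\<close> in an interval in which every \<open>v\<^sub>i\<close> has a complement yields,
  by intersecting complements with the chain, an independent family of \<open>n + 1\<close> elements.
  Such complemented chains occur in complemented sublattices and in every interval
  \<open>[s, s\<^sup>*]\<close>, since the join of finitely many covers of \<open>s\<close> is a complemented interval.
\<close>

section \<open>Finite joins\<close>

definition join_above :: "'a::lattice \<Rightarrow> ('i \<Rightarrow> 'a) \<Rightarrow> 'i set \<Rightarrow> 'a" where
  "join_above z c A = Finite_Set.fold (\<lambda>i acc. sup (c i) acc) z A"

lemma join_above_empty [simp]: "join_above z c {} = z"
  by (simp add: join_above_def)

lemma join_above_insert:
  assumes "finite A"
  shows "join_above z c (insert i A) = sup (c i) (join_above z c A)"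
proof -
  interpret comp_fun_idem "\<lambda>i acc. sup (c i) acc"
    by unfold_locales (auto simp: fun_eq_iff sup_left_commute)
  show ?thesis using assms unfolding join_above_def by simp
qed

lemma join_above_le_iff:
  "finite A \<Longrightarrow> join_above z c A \<le> v \<longleftrightarrow> z \<le> v \<and> (\<forall>i\<in>A. c i \<le> v)"
  by (induction A rule: finite_induct) (auto simp: join_above_insert)

lemma join_above_ge_base: "finite A \<Longrightarrow> z \<le> join_above z c A"
  using join_above_le_iff by blast

lemma join_above_upper: "finite A \<Longrightarrow> i \<in> A \<Longrightarrow> c i \<le> join_above z c A"
  using join_above_le_iff by blast

lemma join_above_mono:
  assumes "finite B" "A \<subseteq> B"
  shows "join_above z c A \<le> join_above z c B"
  using assms finite_subset[OF assms(2,1)]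
  by (auto simp: join_above_le_iff[of A] intro: join_above_ge_base join_above_upper)

lemma join_above_cong:
  "finite A \<Longrightarrow> (\<And>i. i \<in> A \<Longrightarrow> c i = d i) \<Longrightarrow> join_above z c A = join_above z d A"
  by (induction A rule: finite_induct) (auto simp: join_above_insert)

lemma join_above_Un:
  assumes "finite A" "finite B"
  shows "join_above z c (A \<union> B) = sup (join_above z c A) (join_above z c B)"
proof (rule order.antisym)
  have "z \<le> sup (join_above z c A) (join_above z c B)"
    using join_above_ge_base[OF assms(1)] by (rule le_supI1)
  moreover have "\<forall>i\<in>A \<union> B. c i \<le> sup (join_above z c A) (join_above z c B)"
    using join_above_upper[OF assms(1)] join_above_upper[OF assms(2)] by (blast intro: le_supI1 le_supI2)
  ultimately show "join_above z c (A \<union> B) \<le> sup (join_above z c A) (join_above z c B)"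
    using assms by (simp add: join_above_le_iff)
  show "sup (join_above z c A) (join_above z c B) \<le> join_above z c (A \<union> B)"
    using assms by (simp add: join_above_mono)
qed

section \<open>Irredundant families and breadth\<close>

definition irredundant :: "'a::lattice \<Rightarrow> ('i \<Rightarrow> 'a) \<Rightarrow> 'i set \<Rightarrow> bool" where
  "irredundant z c I \<longleftrightarrow> (\<forall>i\<in>I. \<not> c i \<le> join_above z c (I - {i}))"

definition independent_seq :: "'a::lattice \<Rightarrow> (nat \<Rightarrow> 'a) \<Rightarrow> nat \<Rightarrow> bool" where
  "independent_seq z c k \<longleftrightarrow> (\<forall>j<k. z < c j \<and> inf (c j) (join_above z c {..<j}) = z)"

lemma join_above_le_join_above_iff:
  assumes "finite I" "irredundant z c I" "A \<subseteq> I" "B \<subseteq> I"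
  shows "join_above z c A \<le> join_above z c B \<longleftrightarrow> A \<subseteq> B"
proof
  assume le: "join_above z c A \<le> join_above z c B"
  show "A \<subseteq> B"
  proof
    fix i assume i: "i \<in> A"
    show "i \<in> B"
    proof (rule ccontr)
      assume "i \<notin> B"
      hence "join_above z c B \<le> join_above z c (I - {i})"
        using assms by (intro join_above_mono) auto
      moreover have "c i \<le> join_above z c A"
        using i assms finite_subset by (metis join_above_upper)
      ultimately show False
        using le assms(2,3) i unfolding irredundant_def by (meson order_trans subsetD)
    qed
  qed
next
  assume "A \<subseteq> B"
  thus "join_above z c A \<le> join_above z c B"
    using assms(1,4) by (intro join_above_mono) (auto intro: finite_subset)
qed

lemma irredundant_prefix_joins:
  fixes c :: "nat \<Rightarrow> 'a::lattice"
  assumes "irredundant z c {..<m}"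
  defines "P \<equiv> (\<lambda>k. join_above z c {..<k}) ` {..m}"
  shows "is_chain P" and "card P = Suc m"
proof -
  show "is_chain P" unfolding P_def is_chain_def
  proof (intro ballI)
    fix p q assume "p \<in> (\<lambda>k. join_above z c {..<k}) ` {..m}" "q \<in> (\<lambda>k. join_above z c {..<k}) ` {..m}"
    then obtain k l where "p = join_above z c {..<k}" "q = join_above z c {..<l}" by blast
    thus "p \<le> q \<or> q \<le> p" by (cases "k \<le> l") (auto intro!: join_above_mono)
  qed
  have "inj_on (\<lambda>k. join_above z c {..<k}) {..m}"
  proof (rule inj_onI)
    fix k l assume "k \<in> {..m}" "l \<in> {..m}" "join_above z c {..<k} = join_above z c {..<l}"
    hence "{..<k} \<subseteq> {..<l}" "{..<l} \<subseteq> {..<k}"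
      using join_above_le_join_above_iff[OF _ assms(1), of "{..<k}" "{..<l}"]
        join_above_le_join_above_iff[OF _ assms(1), of "{..<l}" "{..<k}"] by auto
    thus "k = l" by simp
  qed
  thus "card P = Suc m" unfolding P_def by (simp add: card_image)
qed

lemma irredundant_length_le:
  assumes "finite I" "irredundant z c I"
  shows "length_le (join_above z c ` Pow I) (card I)"
  unfolding length_le_def
proof (intro allI impI)
  fix C assume C: "C \<subseteq> join_above z c ` Pow I" "is_chain C"
  define \<A> where "\<A> = {A \<in> Pow I. join_above z c A \<in> C}"
  have C_eq: "C = join_above z c ` \<A>" unfolding \<A>_def using C(1) by auto
  have "finite \<A>" unfolding \<A>_def using assms(1) by simp
  \<comment> \<open>the preimage of a chain is a chain of sets, on which cardinality is injective\<close>
  have "inj_on card \<A>"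
  proof (rule inj_onI)
    fix A B assume AB: "A \<in> \<A>" "B \<in> \<A>" "card A = card B"
    have "join_above z c A \<le> join_above z c B \<or> join_above z c B \<le> join_above z c A"
      using C(2) AB unfolding \<A>_def is_chain_def by blast
    hence "A \<subseteq> B \<or> B \<subseteq> A" using join_above_le_join_above_iff[OF assms] AB unfolding \<A>_def by auto
    moreover have "finite A" "finite B" using AB assms(1) unfolding \<A>_def by (auto intro: finite_subset)
    ultimately show "A = B" using AB(3) card_subset_eq by metis
  qed
  moreover have "card ` \<A> \<subseteq> {..card I}" unfolding \<A>_def using assms(1) by (auto intro: card_mono)
  ultimately have "card \<A> \<le> Suc (card I)"
    by (metis card_atMost card_image card_mono finite_atMost)
  moreover have "card C \<le> card \<A>" unfolding C_eq using \<open>finite \<A>\<close> by (rule card_image_le)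
  ultimately show "finite C \<and> card C \<le> card I + 1" using \<open>finite \<A>\<close> C_eq by simp
qed

lemma not_breadth_le_iff_irredundant:
  "\<not> breadth_le TYPE('a::bounded_lattice) n \<longleftrightarrow> (\<exists>z (c::nat \<Rightarrow> 'a). irredundant z c {..<Suc n})"
proof
  assume "\<not> breadth_le TYPE('a) n"
  then obtain m and \<phi> :: "nat set \<Rightarrow> 'a" where
    emb: "\<forall>A\<in>Pow {..<m}. \<forall>B\<in>Pow {..<m}. \<phi> A \<le> \<phi> B \<longleftrightarrow> A \<subseteq> B" and "n < m"
    unfolding breadth_le_def by auto
  have "irredundant bot (\<lambda>i. \<phi> {i}) {..<Suc n}" unfolding irredundant_def
  proof
    fix i assume i: "i \<in> {..<Suc n}"
    have "join_above bot (\<lambda>i. \<phi> {i}) ({..<Suc n} - {i}) \<le> \<phi> ({..<m} - {i})"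
      using emb \<open>n < m\<close> by (auto simp: join_above_le_iff)
    moreover have "\<not> \<phi> {i} \<le> \<phi> ({..<m} - {i})" using emb i \<open>n < m\<close> by auto
    ultimately show "\<not> \<phi> {i} \<le> join_above bot (\<lambda>i. \<phi> {i}) ({..<Suc n} - {i})"
      by (meson order_trans)
  qed
  thus "\<exists>z (c::nat \<Rightarrow> 'a). irredundant z c {..<Suc n}" by blast
next
  assume "\<exists>z (c::nat \<Rightarrow> 'a). irredundant z c {..<Suc n}"
  then obtain z and c :: "nat \<Rightarrow> 'a" where "irredundant z c {..<Suc n}" by blast
  hence "\<forall>A\<in>Pow {..<Suc n}. \<forall>B\<in>Pow {..<Suc n}.
      join_above z c A \<le> join_above z c B \<longleftrightarrow> A \<subseteq> B"
    using join_above_le_join_above_iff by blast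
  thus "\<not> breadth_le TYPE('a) n"
    using breadth_le_def[THEN iffD1, rule_format, of _ n "Suc n" "join_above z c"] by auto
qed

section \<open>Orders of finite length\<close>

lemma chain_insert: "is_chain C \<Longrightarrow> (\<forall>b\<in>C. w \<le> b \<or> b \<le> w) \<Longrightarrow> is_chain (insert w C)"
  unfolding is_chain_def by blast

lemma chain_subset: "is_chain C \<Longrightarrow> D \<subseteq> C \<Longrightarrow> is_chain D"
  unfolding is_chain_def by blast

lemma finite_length_chain_finite:
  "finite_length TYPE('a::order) \<Longrightarrow> is_chain (C::'a set) \<Longrightarrow> finite C"
  unfolding finite_length_def length_le_def by blast

lemma chain_of_greatest_card:
  assumes "finite_length TYPE('a::order)" "Q (C\<^sub>0::'a set)" "is_chain C\<^sub>0"
  obtains C where "Q C" "is_chain C" "\<And>D. Q D \<Longrightarrow> is_chain D \<Longrightarrow> card D \<le> card C"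
proof -
  obtain N where N: "\<And>C::'a set. is_chain C \<Longrightarrow> card C \<le> N + 1"
    using assms(1) unfolding finite_length_def length_le_def by blast
  let ?P = "\<lambda>k. \<exists>C. Q C \<and> is_chain C \<and> card C = k"
  have "?P (card C\<^sub>0)" using assms(2,3) by blast
  moreover have "\<forall>k. ?P k \<longrightarrow> k \<le> N + 1" using N by blast
  ultimately obtain k C where "Q C" "is_chain C" "card C = k" "\<forall>k'. ?P k' \<longrightarrow> k' \<le> k"
    using Nat.ex_has_greatest_nat[of ?P "card C\<^sub>0" "N + 1"] by blast
  thus ?thesis using that by blast
qed

lemma finite_length_maximal_chain:
  assumes "finite_length TYPE('a::order)" "(s::'a) \<in> S"
  obtains C where "C \<subseteq> S" "is_chain C" "finite C" "C \<noteq> {}"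
    "\<And>w. w \<in> S \<Longrightarrow> is_chain (insert w C) \<Longrightarrow> w \<in> C"
proof -
  obtain C where C: "C \<subseteq> S \<and> C \<noteq> {}" "is_chain C"
    and greatest: "\<And>D. D \<subseteq> S \<and> D \<noteq> {} \<Longrightarrow> is_chain D \<Longrightarrow> card D \<le> card C"
    by (rule chain_of_greatest_card[OF assms(1), of "\<lambda>C. C \<subseteq> S \<and> C \<noteq> {}" "{s}"])
      (use assms(2) in \<open>auto simp: is_chain_def\<close>)
  have fin: "finite C" using finite_length_chain_finite[OF assms(1) C(2)] .
  have "w \<in> C" if "w \<in> S" "is_chain (insert w C)" for w
  proof (rule ccontr)
    assume "w \<notin> C"
    hence "card (insert w C) = Suc (card C)" using fin by simp
    moreover have "card (insert w C) \<le> card C"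
      using that C(1) by (intro greatest) auto
    ultimately show False by simp
  qed
  with C fin show ?thesis using that by blast
qed

lemma finite_length_ex_minimal:
  assumes "finite_length TYPE('a::order)" "(S::'a set) \<noteq> {}"
  shows "\<exists>m\<in>S. \<forall>w\<in>S. \<not> w < m"
proof -
  obtain C where C: "C \<subseteq> S" "is_chain C" "finite C" "C \<noteq> {}"
    and saturated: "\<And>w. w \<in> S \<Longrightarrow> is_chain (insert w C) \<Longrightarrow> w \<in> C"
    using assms finite_length_maximal_chain by blast
  obtain m where m: "m \<in> C" "\<forall>b\<in>C. b \<le> m \<longrightarrow> b = m"
    using finite_has_minimal[OF C(3,4)] by metis
  have "\<not> w < m" if "w \<in> S" for w
  proof
    assume "w < m"
    have "w \<le> b" if "b \<in> C" for b
    proof -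
      have "b \<le> m \<or> m \<le> b" using C(2) m(1) that unfolding is_chain_def by blast
      thus ?thesis using m(2) that \<open>w < m\<close> by (metis less_imp_le order_trans)
    qed
    hence "w \<in> C" using saturated[OF that] chain_insert[OF C(2)] by auto
    thus False using m \<open>w < m\<close> by auto
  qed
  thus ?thesis using m C(1) by blast
qed

lemma finite_length_ex_maximal:
  assumes "finite_length TYPE('a::order)" "(S::'a set) \<noteq> {}"
  shows "\<exists>m\<in>S. \<forall>w\<in>S. \<not> m < w"
proof -
  obtain C where C: "C \<subseteq> S" "is_chain C" "finite C" "C \<noteq> {}"
    and saturated: "\<And>w. w \<in> S \<Longrightarrow> is_chain (insert w C) \<Longrightarrow> w \<in> C"
    using assms finite_length_maximal_chain by blast
  obtain m where m: "m \<in> C" "\<forall>b\<in>C. m \<le> b \<longrightarrow> b = m"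
    using finite_has_maximal[OF C(3,4)] by metis
  have "\<not> m < w" if "w \<in> S" for w
  proof
    assume "m < w"
    have "b \<le> w" if "b \<in> C" for b
    proof -
      have "b \<le> m \<or> m \<le> b" using C(2) m(1) that unfolding is_chain_def by blast
      thus ?thesis using m(2) that \<open>m < w\<close> by (metis less_imp_le order_trans)
    qed
    hence "w \<in> C" using saturated[OF that] chain_insert[OF C(2)] by auto
    thus False using m \<open>m < w\<close> by auto
  qed
  thus ?thesis using m C(1) by blast
qed

lemma max_atomistic_extension:
  assumes "finite_length TYPE('a::order)" "atomistic (x::'a) x'"
  obtains s b where "max_atomistic s b" "{x..x'} \<subseteq> {s..b}"
proof -
  let ?Q = "\<lambda>C. \<exists>c d. atomistic c d \<and> {x..x'} \<subseteq> {c..d} \<and> C \<subseteq> {c..d}"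
  obtain C where "?Q C" "is_chain C"
    and greatest: "\<And>D. ?Q D \<Longrightarrow> is_chain D \<Longrightarrow> card D \<le> card C"
    by (rule chain_of_greatest_card[OF assms(1), of ?Q "{}"])
      (use assms(2) in \<open>auto simp: is_chain_def\<close>)
  then obtain c d where cd: "atomistic c d" "{x..x'} \<subseteq> {c..d}" "C \<subseteq> {c..d}" by blast
  have fin: "finite C" using finite_length_chain_finite[OF assms(1) \<open>is_chain C\<close>] .
  have "max_atomistic c d" unfolding max_atomistic_def
  proof (intro conjI notI)
    show "atomistic c d" by (rule cd(1))
    assume "\<exists>c' d'. atomistic c' d' \<and> {c..d} \<subset> {c'..d'}"
    then obtain c' d' where c'd': "atomistic c' d'" "{c..d} \<subset> {c'..d'}" by blast
    have "c \<le> d" using cd(1) unfolding atomistic_def by simp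
    hence c'c: "c' \<le> c" and dd': "d \<le> d'" using c'd'(2) by auto
    \<comment> \<open>a strictly larger interval contains a strictly longer chain: add \<open>c'\<close> or \<open>d'\<close>\<close>
    obtain e where e: "e \<in> {c'..d'}" "e \<notin> C" "\<forall>b\<in>C. e \<le> b \<or> b \<le> e"
    proof (cases "c' = c")
      case True
      hence "d < d'" using c'd'(2) dd' by auto
      thus ?thesis using that[of d'] cd(3) c'c \<open>c \<le> d\<close> by fastforce
    next
      case False
      hence "c' < c" using c'c by simp
      thus ?thesis using that[of c'] cd(3) dd' \<open>c \<le> d\<close> by fastforce
    qed
    have "{c..d} \<subseteq> {c'..d'}" using c'd'(2) by blast
    hence "?Q (insert e C)" using c'd'(1) cd(2,3) e(1) by blast
    hence "card (insert e C) \<le> card C"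
      using greatest chain_insert[OF \<open>is_chain C\<close> e(3)] by blast
    thus False using fin e(2) by simp
  qed
  thus ?thesis using cd(2) that by blast
qed

section \<open>The star operation\<close>

lemma star_eq_join_of_covers:
  assumes FL: "finite_length TYPE('a::bounded_lattice)" and "(s::'a) \<noteq> top"
  obtains F where "finite F" "\<forall>f\<in>F. covers s f" "star s = join_above s id F"
    "\<And>w. covers s w \<Longrightarrow> w \<le> star s"
proof -
  define T where "T = {w. covers s w}"
  have "{w. s < w} \<noteq> {}" using assms(2) top.not_eq_extremum by auto
  from finite_length_ex_minimal[OF FL this]
  obtain t\<^sub>0 where "s < t\<^sub>0" "\<forall>w. s < w \<longrightarrow> \<not> w < t\<^sub>0" by blast
  hence "t\<^sub>0 \<in> T" unfolding T_def covers_def by blast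
  define J where "J = {join_above s id F | F. finite F \<and> F \<subseteq> T}"
  have "join_above s id {} \<in> J" unfolding J_def by blast
  from finite_length_ex_maximal[OF FL, of J] this
  obtain g where "g \<in> J" and maximal: "\<forall>h\<in>J. \<not> g < h" by blast
  then obtain F where F: "finite F" "F \<subseteq> T" "g = join_above s id F" unfolding J_def by blast
  have upper: "t \<le> join_above s id F" if "t \<in> T" for t
  proof -
    have "join_above s id F \<le> join_above s id (insert t F)"
      using F(1) by (simp add: join_above_mono subset_insertI)
    moreover have "join_above s id (insert t F) \<in> J" unfolding J_def using F that by blast
    ultimately have "join_above s id F = join_above s id (insert t F)"
      using maximal F(3) by (metis order.not_eq_order_implies_strict)
    thus ?thesis using join_above_upper[of "insert t F" t id s] F(1) by simp
  qed
  have lub: "is_lub_in UNIV T (join_above s id F)" unfolding is_lub_in_def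
  proof (intro conjI ballI impI)
    fix y assume y: "\<forall>t\<in>T. t \<le> y"
    hence "s \<le> y" using \<open>t\<^sub>0 \<in> T\<close> \<open>s < t\<^sub>0\<close> by (meson less_imp_le order_trans)
    thus "join_above s id F \<le> y" using y F by (auto simp: join_above_le_iff)
  qed (use upper in auto)
  have "(THE g. is_lub_in UNIV T g) = join_above s id F"
  proof (rule the_equality)
    fix g assume "is_lub_in UNIV T g"
    thus "g = join_above s id F" using lub unfolding is_lub_in_def by (meson UNIV_I order.antisym)
  qed (rule lub)
  hence "star s = join_above s id F" unfolding star_def T_def using assms(2) by simp
  with F upper show ?thesis using that unfolding T_def by auto
qed

lemma atomistic_le_star:
  assumes "finite_length TYPE('a::bounded_lattice)" "atomistic (s::'a) b"
  shows "b \<le> star s"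
proof (cases "s = top")
  case True
  thus ?thesis unfolding star_def by simp
next
  case False
  then obtain F where F: "finite F" "star s = join_above s id F" "\<And>w. covers s w \<Longrightarrow> w \<le> star s"
    using star_eq_join_of_covers[OF assms(1)] by metis
  have "s \<le> star s" using F(1,2) join_above_ge_base by metis
  have "s \<le> b" using assms(2) unfolding atomistic_def by blast
  then obtain A where A: "A \<subseteq> interval_atoms s b" "is_lub_in {s..b} A b"
    using assms(2) unfolding atomistic_def by (meson atLeastAtMost_iff order_refl)
  have "inf (star s) b \<in> {s..b}" using \<open>s \<le> star s\<close> \<open>s \<le> b\<close> by simp
  moreover have "\<forall>w\<in>A. w \<le> inf (star s) b" using A(1) F(3) unfolding interval_atoms_def by auto
  ultimately have "b \<le> inf (star s) b" using A(2) unfolding is_lub_in_def by blast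
  thus ?thesis by simp
qed

lemma is_lub_in_interval_mono:
  assumes "is_lub_in {x..y} A (v::'a::lattice)" "y \<le> y'"
  shows "is_lub_in {x..y'} A v"
  unfolding is_lub_in_def
proof (intro conjI ballI impI)
  show "v \<in> {x..y'}" using assms unfolding is_lub_in_def by auto
  show "a \<le> v" if "a \<in> A" for a using assms that unfolding is_lub_in_def by blast
  fix u assume u: "u \<in> {x..y'}" "\<forall>a\<in>A. a \<le> u"
  have "inf u y \<in> {x..y}" "\<forall>a\<in>A. a \<le> inf u y"
    using assms(1) u unfolding is_lub_in_def by (auto intro: order_trans)
  hence "v \<le> inf u y" using assms(1) unfolding is_lub_in_def by blast
  thus "v \<le> u" by simp
qed

lemma is_lub_in_insert:
  assumes "is_lub_in S A (v::'a::lattice)" "sup v b \<in> S"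
  shows "is_lub_in S (insert b A) (sup v b)"
  using assms unfolding is_lub_in_def by (auto intro: le_supI1)

section \<open>Covers in modular lattices\<close>

lemma covers_inf_eq:
  assumes "covers x (a::'a::lattice)" "x \<le> t" "\<not> a \<le> t"
  shows "inf a t = x"
proof -
  have "x \<le> inf a t" using assms unfolding covers_def by (simp add: less_imp_le)
  moreover have "inf a t \<noteq> a" using assms(3) by (metis inf.absorb_iff1)
  ultimately show ?thesis using assms(1) unfolding covers_def
    by (metis inf.cobounded1 order.not_eq_order_implies_strict)
qed

context
  fixes type :: "'a::lattice itself"
  assumes modular: "modular_lattice TYPE('a)"
begin

lemma modular_law: "(x::'a) \<le> z \<Longrightarrow> sup x (inf y z) = inf (sup x y) z"
  using modular unfolding modular_lattice_def by blast

lemma covers_sup_if_covers_inf: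
  assumes "covers (inf a b) (a::'a)"
  shows "covers b (sup a b)"
proof -
  have ab: "inf a b < a" using assms covers_def by blast
  have "b < sup a b"
    using ab by (metis inf.absorb1 inf.strict_order_iff sup.cobounded2 sup.commute sup_absorb1 le_iff_inf)
  moreover have "\<not> (b < w \<and> w < sup a b)" for w
  proof
    assume w: "b < w \<and> w < sup a b"
    have "inf w a \<noteq> a"
      using w by (metis inf.absorb_iff2 le_sup_iff less_le_not_le sup.cobounded1 sup_commute
        inf_commute order.strict_implies_order)
    moreover have "inf a b \<le> inf w a"
      using w by (meson inf.cobounded1 inf.cobounded2 le_inf_iff less_imp_le order_trans)
    ultimately have "inf w a = inf a b" using assms unfolding covers_def
      by (metis inf.cobounded2 order.not_eq_order_implies_strict)
    hence "sup b (inf a w) = b" by (simp add: inf_commute sup.absorb1)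
    moreover have "sup b (inf a w) = inf (sup b a) w" using w modular_law[of b w a] by (simp add: less_imp_le)
    ultimately show False using w by (metis inf.absorb2 less_imp_le sup_commute order.strict_iff_not)
  qed
  ultimately show ?thesis unfolding covers_def by blast
qed

lemma covers_inf_if_covers_sup:
  assumes "covers y (sup y (b::'a))"
  shows "covers (inf y b) b"
proof -
  have "\<not> b \<le> y" using assms unfolding covers_def by (metis sup.absorb1 order.irrefl)
  hence "inf y b < b"
    by (metis inf.cobounded2 inf.absorb_iff2 inf_commute order.not_eq_order_implies_strict)
  moreover have "\<not> (inf y b < t \<and> t < b)" for t
  proof
    assume t: "inf y b < t \<and> t < b"
    have "sup y t \<noteq> y"
      using t by (metis inf.absorb_iff2 le_iff_sup le_inf_iff less_le_not_le sup_commute less_imp_le)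
    moreover have "y \<le> sup y t" "sup y t \<le> sup y b" using t by (auto intro: le_supI2 less_imp_le)
    ultimately have "sup y t = sup y b"
      using assms unfolding covers_def by (metis order.not_eq_order_implies_strict)
    moreover have "sup t (inf y b) = inf (sup t y) b" using modular_law[of t b y] t by (simp add: less_imp_le)
    ultimately have "t = inf (sup y b) b" using t by (metis sup.absorb1 sup_commute less_imp_le)
    thus False using t by (simp add: inf.absorb2)
  qed
  ultimately show ?thesis unfolding covers_def by blast
qed

lemma inf_sup_eq_base:
  assumes "z \<le> (a::'a)" "z \<le> b" "inf a b = z" "inf (sup a b) c = z"
  shows "inf a (sup b c) = z"
proof -
  have "inf (sup b c) (sup a b) = sup b (inf c (sup a b))" using modular_law[of b "sup a b" c] by simp
  also have "\<dots> = b" using assms(2,4) by (simp add: inf_commute sup_absorb1)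
  moreover have "inf a (sup b c) \<le> inf (sup b c) (sup a b)" by (simp add: le_infI1)
  ultimately have "inf a (sup b c) \<le> b" by simp
  hence "inf a (sup b c) \<le> z" using assms(3) by (metis inf.cobounded1 le_inf_iff)
  moreover have "z \<le> inf a (sup b c)" using assms(1,2) by (simp add: le_supI1)
  ultimately show ?thesis by simp
qed

lemma irredundant_covers:
  assumes FL: "finite_length TYPE('a)" and fin: "finite I" and irr: "irredundant z (c::'i \<Rightarrow> 'a) I"
  obtains x and a :: "'i \<Rightarrow> 'a" where "\<forall>i\<in>I. covers x (a i)" "irredundant x a I"
proof -
  define y where "y i = join_above z c (I - {i})" for i
  \<comment> \<open>shrink \<open>c i\<close> to a minimal \<open>d i\<close> escaping \<open>y i\<close>: it covers \<open>d i \<sqinter> y i\<close>, and \<open>x\<close> joins all these meets\<close>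
  have "\<exists>d. d \<le> c i \<and> \<not> d \<le> y i \<and> (\<forall>w. w < d \<longrightarrow> w \<le> c i \<longrightarrow> w \<le> y i)" if "i \<in> I" for i
  proof -
    have "{w. w \<le> c i \<and> \<not> w \<le> y i} \<noteq> {}" using irr that unfolding irredundant_def y_def by auto
    from finite_length_ex_minimal[OF FL this] show ?thesis by blast
  qed
  then obtain d where d: "\<And>i. i \<in> I \<Longrightarrow> d i \<le> c i \<and> \<not> d i \<le> y i \<and> (\<forall>w. w < d i \<longrightarrow> w \<le> c i \<longrightarrow> w \<le> y i)"
    by metis
  define e where "e i = inf (d i) (y i)" for i
  define x where "x = join_above z e I"
  define a where "a i = sup x (d i)" for i
  have cy: "c j \<le> y i" if "i \<in> I" "j \<in> I" "j \<noteq> i" for i j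
    unfolding y_def using that fin by (intro join_above_upper) auto
  have xy: "x \<le> y i" if i: "i \<in> I" for i
    unfolding x_def
  proof (subst join_above_le_iff[OF fin], intro conjI ballI)
    show "z \<le> y i" unfolding y_def using fin by (intro join_above_ge_base) auto
    fix j assume j: "j \<in> I"
    show "e j \<le> y i"
    proof (cases "j = i")
      case False
      have "e j \<le> c j" unfolding e_def using d[OF j] by (meson inf.coboundedI1)
      thus ?thesis using cy[OF i j False] by (meson order_trans)
    qed (simp add: e_def)
  qed
  have "covers (e i) (d i)" if i: "i \<in> I" for i
    unfolding covers_def
  proof
    show "e i < d i" unfolding e_def using d[OF i]
      by (metis inf.absorb_iff1 inf.cobounded1 inf.cobounded2 order.not_eq_order_implies_strict)
    show "\<not> (\<exists>w. e i < w \<and> w < d i)"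
    proof
      assume "\<exists>w. e i < w \<and> w < d i"
      then obtain w where w: "e i < w" "w < d i" by blast
      have "w \<le> y i" using d[OF i] w by (meson order_trans less_imp_le)
      hence "w \<le> e i" unfolding e_def using w by (simp add: less_imp_le)
      thus False using w by simp
    qed
  qed
  moreover have "inf (d i) x = e i" if i: "i \<in> I" for i
  proof (rule order.antisym)
    show "inf (d i) x \<le> e i" unfolding e_def using xy[OF i] by (meson inf_mono order_refl)
    have "e i \<le> x" unfolding x_def using fin i by (rule join_above_upper)
    thus "e i \<le> inf (d i) x" unfolding e_def by simp
  qed
  ultimately have "\<forall>i\<in>I. covers x (a i)" unfolding a_def
    using covers_sup_if_covers_inf by (metis sup_commute)
  moreover have "irredundant x a I" unfolding irredundant_def
  proof
    fix i assume i: "i \<in> I"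
    have "join_above x a (I - {i}) \<le> y i"
    proof (subst join_above_le_iff, use fin in simp, intro conjI ballI)
      show "x \<le> y i" by (rule xy[OF i])
      fix j assume j: "j \<in> I - {i}"
      have "d j \<le> c j" "c j \<le> y i" using d[of j] cy[OF i, of j] j by auto
      hence "d j \<le> y i" by (rule order_trans)
      thus "a j \<le> y i" unfolding a_def using xy[OF i] by simp
    qed
    thus "\<not> a i \<le> join_above x a (I - {i})"
      unfolding a_def using d[OF i] by (meson order_trans sup.cobounded2)
  qed
  ultimately show ?thesis by (rule that)
qed

lemma inf_join_above_covers:
  assumes fin: "finite I" and cov: "\<forall>i\<in>I. covers x ((a::'i \<Rightarrow> 'a) i)" and irr: "irredundant x a I"
    and "A \<subseteq> I" "B \<subseteq> I"
  shows "inf (join_above x a A) (join_above x a B) = join_above x a (A \<inter> B)"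
proof -
  have fB: "finite B" using assms(5) fin finite_subset by blast
  have "finite A" using assms(4) fin finite_subset by blast
  from this \<open>A \<subseteq> I\<close> show ?thesis
  proof (induction A rule: finite_induct)
    case empty
    then show ?case using join_above_ge_base[OF fB, of x a] by (simp add: inf.absorb1)
  next
    case (insert i A)
    have IH: "inf (join_above x a A) (join_above x a B) = join_above x a (A \<inter> B)" using insert by blast
    have JA: "join_above x a (insert i A) = sup (a i) (join_above x a A)"
      using insert(1) by (rule join_above_insert)
    show ?case
    proof (cases "i \<in> B")
      case True
      have "a i \<le> join_above x a B" using fB True by (rule join_above_upper)
      hence "inf (join_above x a (insert i A)) (join_above x a B)
          = sup (a i) (inf (join_above x a A) (join_above x a B))"
        unfolding JA using modular_law by simp
      also have "\<dots> = join_above x a (insert i (A \<inter> B))" using IH insert(1) by (simp add: join_above_insert)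
      finally show ?thesis using True by (simp add: insert_absorb)
    next
      case False
      \<comment> \<open>\<open>a i\<close> meets the join \<open>G\<close> of the other relevant atoms in \<open>x\<close>, so adding it does not change the meet\<close>
      define G where "G = join_above x a (A \<union> B)"
      have "G \<le> join_above x a (I - {i})"
        unfolding G_def using fin insert False assms(5) by (intro join_above_mono) auto
      hence "\<not> a i \<le> G" using irr insert.prems unfolding irredundant_def by (meson insertI1 order_trans subsetD)
      moreover have "x \<le> G" unfolding G_def using insert(1) fB by (intro join_above_ge_base) simp
      ultimately have aG: "inf (a i) G = x" using covers_inf_eq cov insert.prems by blast
      have AG: "join_above x a A \<le> G" and BG: "join_above x a B \<le> G"
        unfolding G_def using insert(1) fB by (auto intro: join_above_mono)
      have "inf (join_above x a (insert i A)) G = sup (join_above x a A) (inf (a i) G)"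
        unfolding JA using modular_law[OF AG] by (simp add: sup_commute)
      also have "\<dots> = join_above x a A"
        unfolding aG using join_above_ge_base[OF insert(1), of x a] by (simp add: sup.absorb1)
      finally have "inf (join_above x a (insert i A)) (join_above x a B) = inf (join_above x a A) (join_above x a B)"
        using BG by (metis inf.absorb2 inf.assoc)
      thus ?thesis using IH False by simp
    qed
  qed
qed

lemma join_above_covers_complemented:
  assumes fin: "finite I" and cov: "\<forall>i\<in>I. covers x ((a::'i \<Rightarrow> 'a) i)"
    and v: "x \<le> v" "v \<le> join_above x a I"
  obtains c where "x \<le> c" "c \<le> join_above x a I" "inf c v = x" "sup c v = join_above x a I"
proof -
  \<comment> \<open>the complement is the join of a maximal set \<open>K\<close> of atoms independent of \<open>v\<close>\<close>
  define \<K> where "\<K> = {K. K \<subseteq> I \<and> inf v (join_above x a K) = x}"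
  have "{} \<in> \<K>" unfolding \<K>_def using v by (simp add: inf.absorb2)
  moreover have "finite \<K>" using fin unfolding \<K>_def by simp
  ultimately obtain K where K: "K \<in> \<K>" "\<forall>K'\<in>\<K>. K \<subseteq> K' \<longrightarrow> K = K'"
    using finite_has_maximal by blast
  have KI: "K \<subseteq> I" and vK: "inf v (join_above x a K) = x" using K unfolding \<K>_def by auto
  have fK: "finite K" using KI fin finite_subset by blast
  define c where "c = join_above x a K"
  have xc: "x \<le> c" unfolding c_def using fK by (rule join_above_ge_base)
  have cI: "c \<le> join_above x a I" unfolding c_def using fin KI by (rule join_above_mono)
  have "a i \<le> sup v c" if i: "i \<in> I" for i
  proof (rule ccontr)
    assume na: "\<not> a i \<le> sup v c"
    have "i \<notin> K" using na fK unfolding c_def by (meson join_above_upper le_supI2)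
    have "x \<le> sup v c" using v by (simp add: le_supI1)
    hence "inf (a i) (sup v c) = x" using covers_inf_eq cov i na by blast
    hence "inf v (sup c (a i)) = x"
      using inf_sup_eq_base[OF v(1) xc] vK unfolding c_def by (simp add: inf_commute)
    hence "insert i K \<in> \<K>" unfolding \<K>_def using KI i fK c_def
      by (simp add: join_above_insert sup_commute)
    thus False using K(2) \<open>i \<notin> K\<close> by blast
  qed
  moreover have "x \<le> sup c v" using v(1) by (simp add: le_supI2)
  ultimately have "join_above x a I \<le> sup c v" using fin by (simp add: join_above_le_iff sup_commute)
  hence "sup c v = join_above x a I" using v cI by (simp add: order.antisym)
  thus ?thesis using that xc cI vK unfolding c_def by (metis inf_commute)
qed

lemma join_above_covers_extend_atom:
  assumes fin: "finite I" and cov: "\<forall>i\<in>I. covers x ((a::'i \<Rightarrow> 'a) i)"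
    and p: "covers x p" "inf p (join_above x a I) = x"
    and w: "x \<le> w" "w \<le> sup p (join_above x a I)" "\<not> w \<le> join_above x a I"
  obtains b where "covers x b" "b \<le> w" "sup (inf w (join_above x a I)) b = w"
proof -
  define y where "y = join_above x a I"
  define v where "v = inf w y"
  have "x \<le> y" unfolding y_def using fin by (rule join_above_ge_base)
  hence "x \<le> v" "v \<le> y" unfolding v_def using w(1) by auto
  then obtain c where c: "x \<le> c" "c \<le> y" "inf c v = x" "sup c v = y"
    using join_above_covers_complemented[OF fin cov] unfolding y_def by metis
  \<comment> \<open>the required atom, built from a complement \<open>c\<close> of \<open>w \<sqinter> y\<close> in \<open>[x, y]\<close>\<close>
  define b where "b = inf w (sup c p)"
  have "inf (sup c p) y = c"
    using modular_law[OF c(2), of p] p(2) c(1) unfolding y_def by (simp add: sup.absorb1 sup_commute inf_commute)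
  hence "inf y b = inf w c" unfolding b_def by (metis inf.assoc inf.commute)
  also have "\<dots> = inf c v" unfolding v_def using c(2) by (metis inf.absorb1 inf.assoc inf.commute)
  finally have yb: "inf y b = x" using c(3) by simp
  have "sup v b = inf (sup v (sup c p)) w"
    unfolding b_def using modular_law[of v w "sup c p"] by (simp add: v_def inf_commute)
  also have "sup v (sup c p) = sup p y" using c(4) by (metis sup_assoc sup_commute)
  finally have vb: "sup v b = w" using w(2) unfolding y_def by (simp add: inf.absorb2)
  have "covers y (sup p y)" using covers_sup_if_covers_inf[of p y] p unfolding y_def by simp
  moreover have "b \<le> sup p y" using w(2) unfolding b_def y_def by (meson inf.coboundedI1)
  hence "y \<le> sup y b" "sup y b \<le> sup p y" by auto
  moreover have "sup y b \<noteq> y"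
    using vb w(3) \<open>v \<le> y\<close> unfolding y_def by (metis le_sup_iff sup.cobounded2)
  ultimately have "sup y b = sup p y" unfolding covers_def
    by (metis order.not_eq_order_implies_strict)
  hence "covers x b" using covers_inf_if_covers_sup[of y b] \<open>covers y (sup p y)\<close> yb by simp
  thus ?thesis using that vb unfolding b_def v_def y_def by simp
qed

lemma atomistic_join_above_covers:
  assumes "finite I" "\<forall>i\<in>I. covers x ((a::'i \<Rightarrow> 'a) i)"
  shows "atomistic x (join_above x a I)"
  using assms
proof (induction I rule: finite_induct)
  case empty
  have "\<forall>w\<in>{x..x}. is_lub_in {x..x} {} w" unfolding is_lub_in_def by auto
  thus ?case unfolding atomistic_def by force
next
  case (insert k I)
  define y where "y = join_above x a I"
  have IH: "atomistic x y" unfolding y_def using insert by simp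
  have cov: "\<forall>i\<in>I. covers x (a i)" "covers x (a k)" using insert.prems by auto
  have y': "join_above x a (insert k I) = sup (a k) y" unfolding y_def using insert(1) by (rule join_above_insert)
  have "x \<le> y" unfolding y_def using insert(1) by (rule join_above_ge_base)
  show ?case
  proof (cases "a k \<le> y")
    case True
    thus ?thesis using IH y' by (simp add: sup.absorb2)
  next
    case False
    have aky: "inf (a k) y = x" using covers_inf_eq[OF cov(2) \<open>x \<le> y\<close> False] .
    have atoms: "interval_atoms x y \<subseteq> interval_atoms x (sup (a k) y)"
      unfolding interval_atoms_def by (auto intro: le_supI2)
    show ?thesis unfolding y' atomistic_def
    proof (intro conjI ballI)
      show "x \<le> sup (a k) y" using \<open>x \<le> y\<close> by (simp add: le_supI2)
      fix w assume w: "w \<in> {x..sup (a k) y}"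
      show "\<exists>A\<subseteq>interval_atoms x (sup (a k) y). is_lub_in {x..sup (a k) y} A w"
      proof (cases "w \<le> y")
        case True
        hence "w \<in> {x..y}" using w by simp
        then obtain A where "A \<subseteq> interval_atoms x y" "is_lub_in {x..y} A w"
          using IH unfolding atomistic_def by blast
        thus ?thesis using atoms is_lub_in_interval_mono[of x y A w "sup (a k) y"] by auto
      next
        case False
        obtain b where b: "covers x b" "b \<le> w" "sup (inf w y) b = w"
          using join_above_covers_extend_atom[OF insert(1) cov(1,2)] aky w False
          unfolding y_def by auto
        have "inf w y \<in> {x..y}" using w \<open>x \<le> y\<close> by auto
        then obtain A where A: "A \<subseteq> interval_atoms x y" "is_lub_in {x..y} A (inf w y)"
          using IH unfolding atomistic_def by blast
        have "insert b A \<subseteq> interval_atoms x (sup (a k) y)"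
          using A(1) atoms b w unfolding interval_atoms_def by auto
        moreover have "is_lub_in {x..sup (a k) y} (insert b A) w"
          using is_lub_in_insert[OF is_lub_in_interval_mono[OF A(2)], of "sup (a k) y" b] b(3) w
          by simp
        ultimately show ?thesis by blast
      qed
    qed
  qed
qed

lemma compl_mod_sublattice_join_above:
  fixes a :: "nat \<Rightarrow> 'a"
  assumes cov: "\<forall>i\<in>{..<m}. covers x (a i)" and irr: "irredundant x a {..<m}"
  shows "compl_mod_sublattice (join_above x a ` Pow {..<m}) m"
proof -
  define I where "I = {..<m}"
  define S where "S = join_above x a ` Pow I"
  have fin: "finite I" unfolding I_def by simp
  have meet: "inf (join_above x a A) (join_above x a B) = join_above x a (A \<inter> B)"
    if "A \<subseteq> I" "B \<subseteq> I" for A B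
    using inf_join_above_covers[OF fin _ _ that] cov irr unfolding I_def by simp
  have join: "sup (join_above x a A) (join_above x a B) = join_above x a (A \<union> B)"
    if "A \<subseteq> I" "B \<subseteq> I" for A B
    using join_above_Un[of A B x a] that fin by (metis finite_subset)
  have "\<forall>p\<in>S. \<forall>q\<in>S. inf p q \<in> S \<and> sup p q \<in> S"
    unfolding S_def using meet join by auto
  moreover have "\<forall>p\<in>S. \<forall>q\<in>S. \<forall>r\<in>S. p \<le> r \<longrightarrow> sup p (inf q r) = inf (sup p q) r"
    using modular_law by blast
  moreover have "\<forall>p\<in>S. join_above x a {} \<le> p \<and> p \<le> join_above x a I"
    unfolding S_def using fin by (auto intro!: join_above_mono join_above_ge_base intro: finite_subset)
  moreover have "\<forall>p\<in>S. \<exists>q\<in>S. inf p q = join_above x a {} \<and> sup p q = join_above x a I"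
  proof
    fix p assume "p \<in> S"
    then obtain A where A: "A \<subseteq> I" "p = join_above x a A" unfolding S_def by blast
    have "inf p (join_above x a (I - A)) = join_above x a {}"
      using meet[of A "I - A"] A by (simp add: Int_Diff)
    moreover have "sup p (join_above x a (I - A)) = join_above x a I"
      using join[of A "I - A"] A by (simp add: Un_absorb1)
    moreover have "join_above x a (I - A) \<in> S" unfolding S_def by auto
    ultimately show "\<exists>q\<in>S. inf p q = join_above x a {} \<and> sup p q = join_above x a I" by blast
  qed
  moreover have "length_eq S m"
  proof -
    let ?P = "(\<lambda>k. join_above x a {..<k}) ` {..m}"
    have "?P \<subseteq> S" unfolding S_def I_def by auto
    moreover have "finite ?P" by simp
    ultimately show ?thesis
      using irredundant_length_le[OF fin irr[folded I_def]] irredundant_prefix_joins[OF irr]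
      unfolding length_eq_def S_def I_def by auto
  qed
  moreover have "join_above x a {} \<in> S" "join_above x a I \<in> S" unfolding S_def by blast+
  ultimately show ?thesis unfolding compl_mod_sublattice_def S_def[symmetric] I_def[symmetric]
    by blast
qed

lemma independent_seq_irredundant:
  assumes "independent_seq z (c::nat \<Rightarrow> 'a) k"
  shows "irredundant z c {..<k}"
proof -
  have "\<forall>i<k. inf (c i) (join_above z c ({..<k} - {i})) = z"
    using assms
  proof (induction k)
    case (Suc k)
    have c: "z \<le> c j" "inf (c j) (join_above z c {..<j}) = z" if "j < Suc k" for j
      using Suc.prems that unfolding independent_seq_def by auto
    have IH: "\<forall>i<k. inf (c i) (join_above z c ({..<k} - {i})) = z"
      using Suc unfolding independent_seq_def by simp
    show ?case
    proof (intro allI impI)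
      fix i assume i: "i < Suc k"
      show "inf (c i) (join_above z c ({..<Suc k} - {i})) = z"
      proof (cases "i = k")
        case True
        hence "{..<Suc k} - {i} = {..<k}" by auto
        thus ?thesis using c True by simp
      next
        case False
        hence "i < k" using i by simp
        have split: "{..<Suc k} - {i} = insert k ({..<k} - {i})" using \<open>i < k\<close> by auto
        have "join_above z c {..<k} = sup (c i) (join_above z c ({..<k} - {i}))"
          using join_above_insert[of "{..<k} - {i}" z c i] \<open>i < k\<close> by (simp add: insert_absorb)
        hence "inf (sup (c i) (join_above z c ({..<k} - {i}))) (c k) = z"
          using c(2)[of k] by (simp add: inf_commute)
        hence "inf (c i) (sup (join_above z c ({..<k} - {i})) (c k)) = z"
          using inf_sup_eq_base[OF c(1)[OF i] join_above_ge_base, of "{..<k} - {i}" c "c k"] IH \<open>i < k\<close>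
          by simp
        thus ?thesis unfolding split by (simp add: join_above_insert sup_commute)
      qed
    qed
  qed simp
  thus ?thesis using assms unfolding independent_seq_def irredundant_def
    by (metis inf.absorb1 lessThan_iff order.irrefl)
qed

text \<open>
  Walking up a complemented chain \<open>v\<^sub>0 < \<dots> < v\<^sub>k\<close> in \<open>[z, u]\<close>, the element
  \<open>c\<^sub>j = y \<sqinter> v\<^sub>j\<^sub>+\<^sub>1\<close>, with \<open>y\<close> a complement of \<open>v\<^sub>j\<close>, is a relative complement of
  \<open>v\<^sub>j\<close> in \<open>[z, v\<^sub>j\<^sub>+\<^sub>1]\<close>; the join of \<open>c\<^sub>0, \<dots>, c\<^sub>j\<^sub>-\<^sub>1\<close> stays below \<open>v\<^sub>j\<close>.
\<close>
lemma complemented_chain_independent_seq: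
  assumes "z \<le> u"
  shows "C \<subseteq> {z..u} \<Longrightarrow> is_chain C \<Longrightarrow> card C = Suc k \<Longrightarrow>
    \<forall>v\<in>C. \<exists>c. z \<le> c \<and> c \<le> u \<and> inf c v = z \<and> sup c v = (u::'a) \<Longrightarrow>
    \<exists>c m. independent_seq z c k \<and> m \<in> C \<and> (\<forall>g\<in>C. g \<le> m) \<and> join_above z c {..<k} \<le> m"
proof (induction k arbitrary: C)
  case 0
  then obtain g where "C = {g}" by (metis card_1_singletonE One_nat_def)
  thus ?case using 0 unfolding independent_seq_def by auto
next
  case (Suc k)
  have "finite C" "C \<noteq> {}" using Suc.prems(3) by (auto intro: card_ge_0_finite)
  then obtain m where m: "m \<in> C" "\<forall>g\<in>C. g \<le> m"
    using finite_has_maximal Suc.prems(2) unfolding is_chain_def by metis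
  have "C - {m} \<subseteq> {z..u}" "is_chain (C - {m})" "card (C - {m}) = Suc k"
    using Suc.prems m(1) chain_subset[OF Suc.prems(2), of "C - {m}"] by auto
  then obtain c m' where IH: "independent_seq z c k" "m' \<in> C - {m}" "\<forall>g\<in>C - {m}. g \<le> m'"
    "join_above z c {..<k} \<le> m'"
    using Suc.IH Suc.prems(4) by blast
  have "m' < m" "m' \<in> C" using IH(2) m by (auto simp: order.strict_iff_order)
  obtain y where y: "z \<le> y" "inf y m' = z" "sup y m' = u" using Suc.prems(4) \<open>m' \<in> C\<close> by blast
  have "z \<le> m" "m \<le> u" using m(1) Suc.prems(1) by auto
  define c' where "c' = c(k := inf y m)"
  have prefix: "join_above z c' {..<j} = join_above z c {..<j}" if "j \<le> k" for j
    unfolding c'_def using that by (intro join_above_cong) auto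
  have "sup (inf y m) m' = m"
    using modular_law[of m' m y] \<open>m' < m\<close> y(3) \<open>m \<le> u\<close> by (simp add: sup_commute inf.absorb2)
  moreover have "z \<le> m'" using \<open>m' \<in> C\<close> Suc.prems(1) by auto
  ultimately have "inf y m \<noteq> z" using \<open>m' < m\<close> by (auto simp: sup.absorb2)
  hence "z < inf y m" using y(1) \<open>z \<le> m\<close> by (simp add: order.strict_iff_order)
  moreover have "inf (inf y m) (join_above z c {..<k}) = z"
  proof (rule order.antisym)
    have "inf (inf y m) (join_above z c {..<k}) \<le> inf y m'"
      using IH(4) \<open>m' < m\<close> by (meson inf_mono inf.cobounded1 inf.cobounded2 le_infI order_trans less_imp_le)
    thus "inf (inf y m) (join_above z c {..<k}) \<le> z" using y(2) by simp
    show "z \<le> inf (inf y m) (join_above z c {..<k})"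
      using y(1) \<open>z \<le> m\<close> join_above_ge_base[of "{..<k}" z c] by simp
  qed
  ultimately have "independent_seq z c' (Suc k)"
    using IH(1) prefix unfolding independent_seq_def c'_def by (auto simp: less_Suc_eq)
  moreover have "join_above z c' {..<Suc k} \<le> m"
    using IH(4) \<open>m' < m\<close> prefix[of k]
    by (simp add: lessThan_Suc join_above_insert c'_def order_trans less_imp_le)
  ultimately show ?case using m by blast
qed

lemma complemented_chain_irredundant:
  assumes "z \<le> u" "C \<subseteq> {z..u}" "is_chain C" "card C = Suc (Suc n)"
    and "\<forall>v\<in>C. \<exists>c. z \<le> c \<and> c \<le> u \<and> inf c v = z \<and> sup c v = (u::'a)"
  shows "\<exists>c. irredundant z c {..<Suc n}"
  using complemented_chain_independent_seq[OF assms] independent_seq_irredundant by blast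

end

section \<open>The three characterisations of breadth\<close>

context
  fixes type :: "'a::bounded_lattice itself"
  assumes modular: "modular_lattice TYPE('a)" and finite_length: "finite_length TYPE('a)"
begin

lemma not_breadth_le_irredundant_covers:
  assumes "\<not> breadth_le TYPE('a) n"
  obtains x and a :: "nat \<Rightarrow> 'a" where "\<forall>i\<in>{..<Suc n}. covers x (a i)" "irredundant x a {..<Suc n}"
proof -
  obtain z and c :: "nat \<Rightarrow> 'a" where "irredundant z c {..<Suc n}"
    using assms not_breadth_le_iff_irredundant by blast
  from irredundant_covers[OF modular finite_length _ this] that show ?thesis by blast
qed

lemma not_breadth_le_compl_mod_sublattice:
  assumes "\<not> breadth_le TYPE('a) n"
  shows "\<exists>S::'a set. compl_mod_sublattice S (n + 1)"
proof -
  obtain x and a :: "nat \<Rightarrow> 'a" where "\<forall>i\<in>{..<Suc n}. covers x (a i)" "irredundant x a {..<Suc n}"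
    using not_breadth_le_irredundant_covers[OF assms] by blast
  from compl_mod_sublattice_join_above[OF modular this] show ?thesis by auto
qed

lemma compl_mod_sublattice_not_breadth_le:
  assumes "compl_mod_sublattice (S::'a set) (n + 1)"
  shows "\<not> breadth_le TYPE('a) n"
proof -
  obtain z u where zu: "z \<in> S" "\<forall>p\<in>S. z \<le> p \<and> p \<le> u"
    "\<forall>p\<in>S. \<exists>q\<in>S. inf p q = z \<and> sup p q = u"
    using assms unfolding compl_mod_sublattice_def by blast
  obtain C where C: "C \<subseteq> S" "is_chain C" "card C = Suc (Suc n)"
    using assms unfolding compl_mod_sublattice_def length_eq_def by auto
  have "\<forall>v\<in>C. \<exists>c. z \<le> c \<and> c \<le> u \<and> inf c v = z \<and> sup c v = u"
    using zu C(1) by (metis inf_commute subsetD sup_commute)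
  moreover have "z \<le> u" "C \<subseteq> {z..u}" using zu(1,2) C(1) by auto
  ultimately have "\<exists>c. irredundant z c {..<Suc n}"
    using complemented_chain_irredundant[OF modular _ _ C(2,3)] by blast
  thus ?thesis using not_breadth_le_iff_irredundant by blast
qed

lemma not_breadth_le_long_skeleton_interval:
  assumes "\<not> breadth_le TYPE('a) n"
  shows "\<exists>s\<in>(skeleton::'a set). \<not> length_le {s..star s} n"
proof -
  obtain x and a :: "nat \<Rightarrow> 'a" where cov: "\<forall>i\<in>{..<Suc n}. covers x (a i)"
    and irr: "irredundant x a {..<Suc n}"
    using not_breadth_le_irredundant_covers[OF assms] by blast
  define x' where "x' = join_above x a {..<Suc n}"
  have "atomistic x x'" unfolding x'_def by (rule atomistic_join_above_covers[OF modular finite_lessThan cov])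
  then obtain s b where sb: "max_atomistic s b" "{x..x'} \<subseteq> {s..b}"
    using max_atomistic_extension[OF finite_length] by blast
  have "s \<in> skeleton" using sb(1) unfolding skeleton_def by blast
  moreover have "b \<le> star s"
    using sb(1) atomistic_le_star[OF finite_length] unfolding max_atomistic_def by blast
  hence "{x..x'} \<subseteq> {s..star s}" using sb(2) by auto
  define P where "P = (\<lambda>k. join_above x a {..<k}) ` {..Suc n}"
  have "P \<subseteq> {x..x'}" unfolding P_def x'_def by (auto intro!: join_above_mono join_above_ge_base)
  hence "P \<subseteq> {s..star s}" using \<open>{x..x'} \<subseteq> {s..star s}\<close> by blast
  have "\<not> length_le {s..star s} n"
  proof
    assume "length_le {s..star s} n"
    hence "card P \<le> n + 1"
      using \<open>P \<subseteq> {s..star s}\<close> irredundant_prefix_joins(1)[OF irr] unfolding P_def length_le_def by blast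
    thus False using irredundant_prefix_joins(2)[OF irr] unfolding P_def by simp
  qed
  with \<open>s \<in> skeleton\<close> show ?thesis by blast
qed

lemma long_star_interval_not_breadth_le:
  assumes "\<not> length_le {s..star (s::'a)} n"
  shows "\<not> breadth_le TYPE('a) n"
proof -
  obtain C where C: "C \<subseteq> {s..star s}" "is_chain C" "\<not> (finite C \<and> card C \<le> n + 1)"
    using assms unfolding length_le_def by blast
  hence long: "\<not> card C \<le> n + 1" using finite_length_chain_finite[OF finite_length C(2)] by simp
  hence "Suc (Suc n) \<le> card C" by simp
  then obtain D where D: "D \<subseteq> C" "card D = Suc (Suc n)" by (rule obtain_subset_with_card_n)
  have "s \<noteq> top"
  proof
    assume "s = top"
    hence "C \<subseteq> {top}" using C(1) unfolding star_def by auto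
    hence "card C \<le> card {top::'a}" by (intro card_mono) simp_all
    thus False using long by simp
  qed
  then obtain F where F: "finite F" "\<forall>f\<in>F. covers s f" "star s = join_above s id F"
    using star_eq_join_of_covers[OF finite_length] by metis
  \<comment> \<open>\<open>[s, s\<^sup>*]\<close> is complemented, being the join of the covers of \<open>s\<close>\<close>
  have "\<exists>c. s \<le> c \<and> c \<le> star s \<and> inf c v = s \<and> sup c v = star s" if "v \<in> D" for v
  proof -
    have v: "s \<le> v" "v \<le> join_above s id F" using that D(1) C(1) F(3) by auto
    obtain c where "s \<le> c" "c \<le> join_above s id F" "inf c v = s" "sup c v = join_above s id F"
      by (rule join_above_covers_complemented[OF modular F(1) _ v]) (use F(2) in simp)
    thus ?thesis using F(3) by auto
  qed
  moreover have "s \<le> star s" using F(1,3) join_above_ge_base by metis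
  moreover have "D \<subseteq> {s..star s}" "is_chain D" using D(1) C(1,2) chain_subset by auto
  ultimately have "\<exists>c. irredundant s c {..<Suc n}"
    using complemented_chain_irredundant[OF modular _ _ _ D(2)] by blast
  thus ?thesis using not_breadth_le_iff_irredundant by blast
qed

end

theorem mainTheorem16:
  fixes n :: nat
  assumes "modular_lattice TYPE('a::bounded_lattice)"
    and "finite_length TYPE('a)"
    and "n \<ge> 1"
  shows "(breadth_le TYPE('a) n \<longleftrightarrow> \<not> (\<exists>S::'a set. compl_mod_sublattice S (n + 1)))
       \<and> (breadth_le TYPE('a) n \<longleftrightarrow> (\<forall>x\<in>(skeleton::'a set). length_le {x..star x} n))"
  using not_breadth_le_compl_mod_sublattice[OF assms(1,2)]
    compl_mod_sublattice_not_breadth_le[OF assms(1,2)]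
    not_breadth_le_long_skeleton_interval[OF assms(1,2)]
    long_star_interval_not_breadth_le[OF assms(1,2)]
  by blast

end
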